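(* Let $\epsilon\ge0$, $k=b/((1+\epsilon)\ln b)$, and let $b$ be sufficiently large. Let $(x_0,y_0)$ be proper $k$-colorings of the star graph $G^*$ with $x_0(r)=y_0(r)$ and such that there are colors $c_1,c_2$ with $x_0(\ell)=c_1$, $y_0(\ell)=c_2$ for every leaf $\ell$ with $x_0(\ell)\ne y_0(\ell)$. Then for the maximal one-step coupling $(X_t,Y_t)$ started at $(x_0,y_0)$, with probability at least $1/2$ we have $X_{T_2}=Y_{T_2}$, where $T_2=4(b+1)\ln b$.
   Context: $G^*$: star graph with root $r$ and $b$ leaves. $A_\sigma(v)=\{c\in\{1,\dots,k\}: c\ne\sigma(u)\ \forall u\sim v\}$. Heat-bath Glauber dynamics: choose a uniform vertex and recolor it uniformly from its available colors. Maximal one-step coupling: both chains choose the same uniform vertex $v$; for each $c\in A_{X_t}(v)\cap A_{Y_t}(v)$, with probability $1/\max\{|A_{X_t}(v)|,|A_{Y_t}(v)|\}$ both set $v$ to $c$; otherwise colors are drawn from the correct marginals, coupled arbitrarily. *)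

theory Defs
  imports "HOL-Probability.Probability"
begin

text \<open>Star graph G* with b leaves: vertex 0 is the root r, vertices 1..b are the leaves.
  A k-coloring is an extensional function from {0..b} to {1..k}.\<close>

definition star_adj :: "nat \<Rightarrow> nat \<Rightarrow> nat \<Rightarrow> bool" where
  "star_adj b u v \<longleftrightarrow> (u = 0 \<and> v \<in> {1..b}) \<or> (v = 0 \<and> u \<in> {1..b})"

definition colorings :: "nat \<Rightarrow> nat \<Rightarrow> (nat \<Rightarrow> nat) set" where
  "colorings b k = {0..b} \<rightarrow>\<^sub>E {1..k}"

definition proper_coloring :: "nat \<Rightarrow> nat \<Rightarrow> (nat \<Rightarrow> nat) \<Rightarrow> bool" where
  "proper_coloring b k \<sigma> \<longleftrightarrow> \<sigma> \<in> colorings b k \<and>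
     (\<forall>u\<in>{0..b}. \<forall>v\<in>{0..b}. star_adj b u v \<longrightarrow> \<sigma> u \<noteq> \<sigma> v)"

definition avail :: "nat \<Rightarrow> nat \<Rightarrow> (nat \<Rightarrow> nat) \<Rightarrow> nat \<Rightarrow> nat set" where
  "avail b k \<sigma> v = {c \<in> {1..k}. \<forall>u\<in>{0..b}. star_adj b u v \<longrightarrow> c \<noteq> \<sigma> u}"

text \<open>A (time-dependent) one-step coupling kernel: given the time t, the current pair of
  colorings and the chosen vertex v, a joint law of the two new colors of v.
  It is a maximal one-step coupling of heat-bath Glauber dynamics if both marginals
  are uniform on the respective available sets and each common available color c
  is chosen jointly with probability (at least, hence exactly) 1/max(|A_X(v)|,|A_Y(v)|);
  the rest of the joint law is arbitrary.\<close>
definition maximal_coupling_kernel ::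
  "nat \<Rightarrow> nat \<Rightarrow> (nat \<Rightarrow> (nat \<Rightarrow> nat) \<times> (nat \<Rightarrow> nat) \<Rightarrow> nat \<Rightarrow> (nat \<times> nat) pmf) \<Rightarrow> bool" where
  "maximal_coupling_kernel b k K \<longleftrightarrow>
     (\<forall>t x y v. proper_coloring b k x \<longrightarrow> proper_coloring b k y \<longrightarrow> v \<in> {0..b} \<longrightarrow>
        map_pmf fst (K t (x, y) v) = pmf_of_set (avail b k x v) \<and>
        map_pmf snd (K t (x, y) v) = pmf_of_set (avail b k y v) \<and>
        (\<forall>c \<in> avail b k x v \<inter> avail b k y v.
           pmf (K t (x, y) v) (c, c) \<ge> 1 / real (max (card (avail b k x v)) (card (avail b k y v)))))"

primrec coupled_chain ::
  "nat \<Rightarrow> (nat \<Rightarrow> (nat \<Rightarrow> nat) \<times> (nat \<Rightarrow> nat) \<Rightarrow> nat \<Rightarrow> (nat \<times> nat) pmf) \<Rightarrow>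
   (nat \<Rightarrow> nat) \<Rightarrow> (nat \<Rightarrow> nat) \<Rightarrow> nat \<Rightarrow> ((nat \<Rightarrow> nat) \<times> (nat \<Rightarrow> nat)) pmf" where
  "coupled_chain b K x0 y0 0 = return_pmf (x0, y0)"
| "coupled_chain b K x0 y0 (Suc t) =
     bind_pmf (coupled_chain b K x0 y0 t) (\<lambda>(x, y).
       bind_pmf (pmf_of_set {0..b}) (\<lambda>v.
         map_pmf (\<lambda>(c, c'). (x(v := c), y(v := c'))) (K t (x, y) v)))"

end

theory Submission
  imports Defs
begin

text \<open>
  Leaves always see the same root colour in both chains, so under the maximal coupling a
  recoloured leaf agrees afterwards; disagreements therefore only disappear, each one at rate
  1/(b+1). The root stays coupled as long as both chains see the same set of leaf colours, which
  holds while c1 and c2 each still colour some leaf in both chains. The probability of not having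
  coalesced after n steps is bounded by a potential: the expected number of surviving
  disagreements, card D * (b/(b+1))^n, plus for c = c1, c2 a function of the number of leaves
  coloured c in both chains that bounds the chance of a root update while that number is 0.
  This function is a sum of explicit supersolutions exp(-L(1-\<alpha>^j)) (1-\<alpha>^j/2)^u of the
  one-step recursion, \<alpha> = b/(b+1), L = b/(2(k-1)). For T = 4(b+1) ln b and k \<le> b / ln b all
  terms are small.
\<close>

section \<open>Elementary estimates\<close>

lemma one_minus_power_ge:
  fixes \<nu> :: real
  assumes "0 \<le> \<nu>" "\<nu> \<le> 1"
  shows "real j * \<nu> * (1 - \<nu>)^j \<le> 1 - (1 - \<nu>)^j"
proof (induction j)
  case 0 then show ?case by simp
next
  case (Suc j)
  have mono: "(1 - \<nu>)^Suc j \<le> (1 - \<nu>)^j"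
    using assms by (simp, intro mult_left_le_one_le) auto
  have "real (Suc j) * \<nu> * (1 - \<nu>)^Suc j = real j * \<nu> * (1 - \<nu>)^Suc j + \<nu> * (1 - \<nu>)^Suc j"
    by (simp add: algebra_simps)
  also have "\<dots> \<le> real j * \<nu> * (1 - \<nu>)^j + \<nu> * (1 - \<nu>)^j"
    using mono assms by (intro add_mono mult_left_mono) auto
  also have "\<dots> \<le> 1 - (1 - \<nu>)^Suc j"
    using Suc.IH by (simp add: algebra_simps)
  finally show ?case .
qed

lemma exp_neg_one_minus_power_le:
  fixes L \<nu> :: real
  assumes L: "0 \<le> L" and \<nu>: "0 \<le> \<nu>" "\<nu> \<le> 1"
  shows "exp (- L * (1 - (1 - \<nu>)^j)) \<le> exp (- (L * \<nu> / 2))^j + exp (- (L / 2))"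
proof (cases "(1 - \<nu>)^j \<ge> 1/2")
  case True
  have "real j * \<nu> * (1/2) \<le> real j * \<nu> * (1 - \<nu>)^j"
    using True \<nu> by (intro mult_left_mono) auto
  then have "real j * \<nu> * (1/2) \<le> 1 - (1 - \<nu>)^j"
    using one_minus_power_ge[OF \<nu>, of j] by linarith
  then have "L * (real j * \<nu> * (1/2)) \<le> L * (1 - (1 - \<nu>)^j)"
    using L by (intro mult_left_mono) auto
  then have "- L * (1 - (1 - \<nu>)^j) \<le> real j * (- (L * \<nu> / 2))"
    by (simp add: algebra_simps)
  then have "exp (- L * (1 - (1 - \<nu>)^j)) \<le> exp (- (L * \<nu> / 2))^j"
    by (simp add: exp_of_nat_mult[symmetric])
  then show ?thesis using exp_gt_zero[of "- (L / 2)"] by linarith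
next
  case False
  then have "L * (1/2) \<le> L * (1 - (1 - \<nu>)^j)"
    using L by (intro mult_left_mono) auto
  then have "exp (- L * (1 - (1 - \<nu>)^j)) \<le> exp (- (L / 2))"
    by simp
  moreover have "exp (- (L * \<nu> / 2))^j \<ge> 0"
    by simp
  ultimately show ?thesis by linarith
qed

lemma sum_exp_neg_power_le:
  fixes x :: real
  assumes "x > 0"
  shows "(\<Sum>j<T. exp (- x)^j) \<le> (1 + x) / x"
proof -
  have e: "exp (- x) \<le> 1 / (1 + x)"
    using exp_ge_add_one_self[of x] assms by (simp add: exp_minus inverse_eq_divide divide_left_mono)
  then have gap: "x / (1 + x) \<le> 1 - exp (- x)"
    using assms by (simp add: field_simps)
  have "(\<Sum>j<T. exp (- x)^j) = (1 - exp (- x)^T) / (1 - exp (- x))"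
    using assms by (simp add: sum_gp_strict)
  also have "\<dots> \<le> 1 / (1 - exp (- x))"
    using assms by (intro divide_right_mono) auto
  also have "\<dots> \<le> 1 / (x / (1 + x))"
    using gap assms by (intro divide_left_mono) auto
  finally show ?thesis by simp
qed

lemma sum_exp_neg_one_minus_power_le:
  fixes L \<nu> :: real
  assumes L: "0 < L" and \<nu>: "0 < \<nu>" "\<nu> \<le> 1"
  shows "(\<Sum>j<T. exp (- L * (1 - (1 - \<nu>)^j))) \<le> 2 / (L * \<nu>) + 1 + real T * exp (- (L / 2))"
proof -
  define x where "x = L * \<nu> / 2"
  have x: "0 < x"
    unfolding x_def using L \<nu> by simp
  have "(\<Sum>j<T. exp (- L * (1 - (1 - \<nu>)^j))) \<le> (\<Sum>j<T. exp (- x)^j + exp (- (L / 2)))"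
    unfolding x_def using L \<nu> by (intro sum_mono exp_neg_one_minus_power_le) auto
  also have "\<dots> = (\<Sum>j<T. exp (- x)^j) + real T * exp (- (L / 2))"
    by (simp add: sum.distrib)
  also have "\<dots> \<le> (1 + x) / x + real T * exp (- (L / 2))"
    using sum_exp_neg_power_le[OF x] by simp
  also have "(1 + x) / x = 2 / (L * \<nu>) + 1"
    unfolding x_def using L \<nu> by (simp add: field_simps)
  finally show ?thesis .
qed

lemma mult_exp_neg_quarter_le:
  fixes s :: real
  assumes "s \<ge> 400"
  shows "s * exp (- (s / 4)) \<le> 1 / 90"
proof -
  have "s / 12 \<le> exp (s / 12)"
    using exp_ge_add_one_self[of "s / 12"] by linarith
  then have "(s / 12)^3 \<le> exp (s / 12)^3"
    using assms by (intro power_mono) auto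
  also have "\<dots> = exp (s / 4)"
    by (simp add: exp_of_nat_mult[symmetric])
  finally have cube: "(s / 12)^3 \<le> exp (s / 4)" .
  have "s * exp (- (s / 4)) = s / exp (s / 4)"
    by (simp add: exp_minus field_simps)
  also have "\<dots> \<le> s / (s / 12)^3"
    using cube assms by (intro divide_left_mono) auto
  also have "\<dots> = 1728 / s^2"
    using assms by (simp add: field_simps power3_eq_cube power2_eq_square)
  also have "\<dots> \<le> 1728 / 400^2"
    using assms by (intro divide_left_mono power_mono) auto
  finally show ?thesis by simp
qed

lemma large_base_power_le:
  fixes b T :: nat
  assumes lnb: "ln (real b) \<ge> 400" and T: "real T \<ge> 4 * (real b + 1) * ln (real b)"
  shows "real b * (real b / (real b + 1))^T \<le> 1 / 100"
proof -
  define s where "s = ln (real b)"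
  define \<nu> where "\<nu> = 1 / (real b + 1)"
  have b_pos: "real b > 0" using lnb by (cases "b = 0") auto
  have \<nu>: "0 < \<nu>" "\<nu> \<le> 1" "real b / (real b + 1) = 1 - \<nu>"
    unfolding \<nu>_def using b_pos by (auto simp: field_simps)
  have "4 * s = \<nu> * (4 * (real b + 1) * s)"
    unfolding \<nu>_def by (simp add: field_simps)
  also have "\<dots> \<le> \<nu> * real T"
    using T \<nu> unfolding s_def by (intro mult_left_mono) auto
  finally have decay: "4 * s \<le> \<nu> * real T" .
  have "(1 - \<nu>)^T \<le> exp (- \<nu>)^T"
    using exp_ge_add_one_self[of "- \<nu>"] \<nu> by (intro power_mono) auto
  also have "\<dots> = exp (- (\<nu> * real T))"
    by (simp add: exp_of_nat_mult[symmetric] algebra_simps)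
  also have "\<dots> \<le> exp (- (4 * s))"
    using decay by simp
  finally have "(1 - \<nu>)^T \<le> exp (- (4 * s))" .
  then have "real b * (1 - \<nu>)^T \<le> exp s * exp (- (4 * s))"
    using b_pos unfolding s_def by (simp add: mult_left_mono)
  also have "\<dots> = exp (- (3 * s))"
    by (simp add: exp_add[symmetric])
  also have "\<dots> \<le> 1 / (1 + 3 * s)"
  proof -
    have "1 / exp (3 * s) \<le> 1 / (1 + 3 * s)"
      using exp_ge_add_one_self[of "3 * s"] lnb unfolding s_def by (intro divide_left_mono) auto
    then show ?thesis by (simp add: exp_minus inverse_eq_divide)
  qed
  also have "\<dots> \<le> 1 / 100"
    using lnb unfolding s_def by (simp add: field_simps)
  finally show ?thesis unfolding \<nu> .
qed

lemma large_base_exp_sum_le: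
  fixes b k T :: nat
  assumes lnb: "ln (real b) \<ge> 400" and k: "k \<ge> 2" and kb: "real k * ln (real b) \<le> real b"
    and T: "real T \<le> 4 * (real b + 1) * ln (real b) + 1"
  shows "(\<Sum>j<T. exp (- (real b / (2 * (real k - 1))) * (1 - (real b / (real b + 1))^j)))
           / (real b + 1) \<le> 1 / 10"
proof -
  define s where "s = ln (real b)"
  define \<nu> where "\<nu> = 1 / (real b + 1)"
  define L where "L = real b / (2 * (real k - 1))"
  have b_pos: "real b > 0" using lnb by (cases "b = 0") auto
  have \<nu>: "0 < \<nu>" "\<nu> \<le> 1" "real b / (real b + 1) = 1 - \<nu>"
    unfolding \<nu>_def using b_pos by (auto simp: field_simps)
  have "(real k - 1) * s \<le> real b"
    using kb lnb unfolding s_def by (simp add: algebra_simps)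
  then have Ls: "s / 2 \<le> L"
    unfolding L_def using k by (simp add: field_simps)
  then have L_pos: "L > 0"
    using lnb unfolding s_def by simp
  have "2 / L \<le> 1 / 100"
    using Ls lnb L_pos unfolding s_def by (simp add: field_simps)
  moreover have "\<nu> \<le> 1 / 100"
  proof -
    have "real b \<ge> 1 + s"
      using exp_ge_add_one_self[of s] b_pos unfolding s_def by simp
    then show ?thesis
      using lnb unfolding \<nu>_def s_def by (simp add: field_simps)
  qed
  moreover have "\<nu> * real T * exp (- (L / 2)) \<le> 5 / 90"
  proof -
    have "\<nu> * real T \<le> \<nu> * (4 * (real b + 1) * s + 1)"
      using T \<nu> unfolding s_def by (intro mult_left_mono) auto
    also have "\<dots> = 4 * s + \<nu>"
      unfolding \<nu>_def by (simp add: field_simps)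
    finally have time: "\<nu> * real T \<le> 5 * s"
      using \<nu> lnb unfolding s_def by simp
    have tail: "exp (- (L / 2)) \<le> exp (- (s / 4))"
      using Ls by simp
    have "\<nu> * real T * exp (- (L / 2)) \<le> (5 * s) * exp (- (s / 4))"
      by (rule mult_mono[OF time tail]) (use lnb in \<open>auto simp: s_def\<close>)
    then show ?thesis
      using mult_exp_neg_quarter_le[of s] lnb unfolding s_def by simp
  qed
  moreover have "\<nu> * (2 / (L * \<nu>) + 1 + real T * exp (- (L / 2))) = 2 / L + \<nu> + \<nu> * real T * exp (- (L / 2))"
    using \<nu> L_pos by (simp add: field_simps)
  ultimately have "\<nu> * (\<Sum>j<T. exp (- L * (1 - (1 - \<nu>)^j))) \<le> 1 / 10"
    using mult_left_mono[OF sum_exp_neg_one_minus_power_le[OF L_pos \<nu>(1,2)], of \<nu> T] \<nu> by linarith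
  then show ?thesis
    unfolding \<nu> L_def \<nu>_def by (simp add: field_simps)
qed

section \<open>Supersolutions of the shared-leaf recursion\<close>

lemma power_add_ge_linear:
  fixes \<beta> h :: real
  assumes "0 \<le> \<beta>" "0 \<le> h"
  shows "\<beta>^Suc w + real (Suc w) * \<beta>^w * h \<le> (\<beta> + h)^Suc w"
proof (induction w)
  case 0 then show ?case by simp
next
  case (Suc w)
  have "\<beta>^Suc (Suc w) + real (Suc (Suc w)) * \<beta>^Suc w * h
      \<le> (\<beta> + h) * (\<beta>^Suc w + real (Suc w) * \<beta>^w * h)"
    using assms by (simp add: algebra_simps)
  also have "\<dots> \<le> (\<beta> + h) * (\<beta> + h)^Suc w"
    using Suc assms by (intro mult_left_mono) auto
  finally show ?case by simp
qed

text \<open>The expectation of f after one step of the number u of leaves coloured c in both chains,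
  for a colour c other than the root's: the uniform vertex is the root (no change), a leaf of
  the set (it keeps c with chance 1/(k-1)) or another leaf (it takes c with chance 1/(k-1)).\<close>
definition shared_count_step :: "nat \<Rightarrow> nat \<Rightarrow> (nat \<Rightarrow> real) \<Rightarrow> nat \<Rightarrow> real" where
  "shared_count_step b k f u =
     (f u + real u * ((1 / (real k - 1)) * f u + (1 - 1 / (real k - 1)) * f (u - 1))
      + (real b - real u) * ((1 / (real k - 1)) * f (Suc u) + (1 - 1 / (real k - 1)) * f u))
     / (real b + 1)"

definition risk_term :: "nat \<Rightarrow> nat \<Rightarrow> nat \<Rightarrow> nat \<Rightarrow> real" where
  "risk_term b k j u =
     exp (- (real b / (2 * (real k - 1))) * (1 - (real b / (real b + 1))^j))
     * (1 - (real b / (real b + 1))^j / 2)^u"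

text \<open>By root_risk_step, root_risk b k n u bounds the chance that, starting from u leaves
  coloured c in both chains, the root is updated within n steps at a moment when that number is 0.\<close>
definition root_risk :: "nat \<Rightarrow> nat \<Rightarrow> nat \<Rightarrow> nat \<Rightarrow> real" where
  "root_risk b k n u = (\<Sum>j<n. risk_term b k j u) / (real b + 1)"

lemma base_power_le_one: "(real b / (real b + 1))^j \<le> 1"
  by (simp add: power_le_one)

lemma risk_term_nonneg: "0 \<le> risk_term b k j u"
  unfolding risk_term_def using base_power_le_one[of b j] by simp

lemma risk_term_le_exp:
  "risk_term b k j u \<le> exp (- (real b / (2 * (real k - 1))) * (1 - (real b / (real b + 1))^j))"
  unfolding risk_term_def using base_power_le_one[of b j]
  by (intro mult_left_le) (auto intro!: power_le_one)

lemma root_risk_nonneg: "0 \<le> root_risk b k n u"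
  unfolding root_risk_def by (intro divide_nonneg_nonneg sum_nonneg risk_term_nonneg) auto

lemma geometric_one_step_le:
  fixes b \<nu> q \<delta> :: real
  assumes \<nu>: "\<nu> * (b + 1) = 1" "0 < \<nu>" "0 \<le> b" and q: "0 < q" "q \<le> 1" and \<delta>: "0 \<le> \<delta>" "\<delta> \<le> 1/2"
  shows "\<nu> * ((1 - \<delta>)^u + real u * (q * (1 - \<delta>)^u + (1 - q) * (1 - \<delta>)^(u - 1))
           + (b - real u) * (q * (1 - \<delta>)^Suc u + (1 - q) * (1 - \<delta>)^u))
         \<le> exp (- (b * \<nu> * q * \<delta>)) * (1 - \<delta> + \<nu> * \<delta>)^u"
proof -
  define \<beta> where "\<beta> = 1 - \<delta>"
  define X where "X = b * \<nu> * q * \<delta>"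
  have b\<nu>: "b * \<nu> \<le> 1"
    using \<nu> by (simp add: algebra_simps)
  have X: "0 \<le> X" "X \<le> 1"
  proof -
    show "0 \<le> X" unfolding X_def using \<nu> q \<delta> by simp
    have "b * \<nu> * q * \<delta> \<le> 1 * 1 * 1"
      using \<nu> b\<nu> q \<delta> by (intro mult_mono) auto
    then show "X \<le> 1" unfolding X_def by simp
  qed
  have \<beta>: "0 \<le> \<beta>" unfolding \<beta>_def using \<delta> by simp
  have damp: "(1 - X) * (\<beta> + \<nu> * \<delta>)^u \<le> exp (- X) * (\<beta> + \<nu> * \<delta>)^u"
    using exp_ge_add_one_self[of "- X"] \<beta> \<nu> \<delta> by (intro mult_right_mono) auto
  show ?thesis
  proof (cases u)
    case 0
    have "\<nu> * (1 + b * (q * \<beta> + (1 - q))) = 1 - X"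
      using \<nu>(1) unfolding X_def \<beta>_def by algebra
    then show ?thesis
      using damp 0 unfolding \<beta>_def X_def by simp
  next
    case (Suc w)
    define P where "P = \<beta>^w"
    have "(1 - X) * (\<beta>^Suc w + real (Suc w) * \<beta>^w * (\<nu> * \<delta>)) \<le> (1 - X) * (\<beta> + \<nu> * \<delta>)^u"
      unfolding Suc using power_add_ge_linear[OF \<beta>, of "\<nu> * \<delta>" w] X \<nu> \<delta>
      by (intro mult_left_mono) auto
    moreover have "\<nu> * (\<beta> * P + real (Suc w) * (q * (\<beta> * P) + (1 - q) * P)
        + (b - real (Suc w)) * (q * (\<beta> * (\<beta> * P)) + (1 - q) * (\<beta> * P)))
      = (1 - X) * (\<beta> * P + real (Suc w) * P * (\<nu> * \<delta>))
        - real (Suc w) * \<nu> * \<delta> * P * q * \<delta> * (1 - b * \<nu>)"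
      using \<nu>(1) unfolding X_def \<beta>_def by algebra
    moreover have "0 \<le> real (Suc w) * \<nu> * \<delta> * P * q * \<delta> * (1 - b * \<nu>)"
      unfolding P_def using \<nu> b\<nu> \<delta> q \<beta> by (intro mult_nonneg_nonneg) auto
    ultimately show ?thesis
      using damp Suc unfolding P_def \<beta>_def[symmetric] X_def[symmetric] by simp
  qed
qed

lemma risk_term_step:
  assumes k: "k \<ge> 2"
  shows "shared_count_step b k (risk_term b k j) u \<le> risk_term b k (Suc j) u"
proof -
  define \<nu> where "\<nu> = 1 / (real b + 1)"
  define q where "q = 1 / (real k - 1)"
  define \<alpha> where "\<alpha> = real b / (real b + 1)"
  define \<delta> where "\<delta> = \<alpha>^j / 2"
  define L where "L = real b / (2 * (real k - 1))"
  define a where "a = exp (- L * (1 - \<alpha>^j))"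
  have \<nu>: "\<nu> * (real b + 1) = 1" "0 < \<nu>" "\<alpha> = 1 - \<nu>"
    unfolding \<nu>_def \<alpha>_def by (auto simp: field_simps)
  have q: "0 < q" "q \<le> 1" unfolding q_def using k by auto
  have "\<alpha>^j \<le> 1" "0 \<le> \<alpha>^j" unfolding \<alpha>_def by (auto simp: power_le_one)
  then have \<delta>: "0 \<le> \<delta>" "\<delta> \<le> 1/2" unfolding \<delta>_def by auto
  have term_j: "risk_term b k j v = a * (1 - \<delta>)^v" for v
    unfolding risk_term_def a_def L_def \<delta>_def \<alpha>_def by simp
  have "L = real b * q / 2"
    unfolding L_def q_def by simp
  then have exponent: "- L * (1 - \<alpha>^Suc j) = - L * (1 - \<alpha>^j) + - (real b * \<nu> * q * \<delta>)"
    unfolding \<delta>_def \<nu>(3) by (simp add: field_simps)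
  have base: "1 - \<alpha>^Suc j / 2 = 1 - \<delta> + \<nu> * \<delta>"
    unfolding \<delta>_def \<nu>(3) by (simp add: field_simps)
  have "risk_term b k (Suc j) u = exp (- L * (1 - \<alpha>^Suc j)) * (1 - \<alpha>^Suc j / 2)^u"
    unfolding risk_term_def L_def \<alpha>_def by simp
  then have term_Suc_j: "risk_term b k (Suc j) u = a * (exp (- (real b * \<nu> * q * \<delta>)) * (1 - \<delta> + \<nu> * \<delta>)^u)"
    unfolding exponent base exp_add a_def by simp
  have "shared_count_step b k (risk_term b k j) u =
      a * (\<nu> * ((1 - \<delta>)^u + real u * (q * (1 - \<delta>)^u + (1 - q) * (1 - \<delta>)^(u - 1))
        + (real b - real u) * (q * (1 - \<delta>)^Suc u + (1 - q) * (1 - \<delta>)^u)))"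
    unfolding shared_count_step_def term_j q_def[symmetric] \<nu>_def by (simp add: field_simps)
  also have "\<dots> \<le> risk_term b k (Suc j) u"
    unfolding term_Suc_j using geometric_one_step_le[OF \<nu>(1,2) _ q \<delta>]
    by (intro mult_left_mono) (auto simp: a_def)
  finally show ?thesis .
qed

lemma shared_count_step_sum_divide:
  "shared_count_step b k (\<lambda>v. (\<Sum>j\<in>J. f j v) / c) u = (\<Sum>j\<in>J. shared_count_step b k (f j) u) / c"
proof -
  define w0 where "w0 = 1 + real u / (real k - 1) + (real b - real u) * (1 - 1 / (real k - 1))"
  define w1 where "w1 = real u * (1 - 1 / (real k - 1))"
  define w2 where "w2 = (real b - real u) / (real k - 1)"
  have weights: "shared_count_step b k g u = (w0 * g u + w1 * g (u - 1) + w2 * g (Suc u)) / (real b + 1)" for g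
    unfolding shared_count_step_def w0_def w1_def w2_def by (simp add: algebra_simps)
  have "(\<Sum>j\<in>J. shared_count_step b k (f j) u)
      = (w0 * (\<Sum>j\<in>J. f j u) + w1 * (\<Sum>j\<in>J. f j (u - 1)) + w2 * (\<Sum>j\<in>J. f j (Suc u))) / (real b + 1)"
    unfolding weights by (simp add: sum_divide_distrib[symmetric] sum.distrib sum_distrib_left)
  then show ?thesis
    unfolding weights by (simp add: add_divide_distrib mult.commute)
qed

lemma root_risk_step:
  assumes "k \<ge> 2"
  shows "(if u = 0 then 1 else 0) / (real b + 1) + shared_count_step b k (root_risk b k n) u
           \<le> root_risk b k (Suc n) u"
proof -
  have "(if u = 0 then 1 else 0) \<le> risk_term b k 0 u"
    unfolding risk_term_def by simp
  moreover have "(\<Sum>j<n. shared_count_step b k (risk_term b k j) u) \<le> (\<Sum>j<n. risk_term b k (Suc j) u)"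
    using assms by (intro sum_mono risk_term_step)
  ultimately have "(if u = 0 then 1 else 0) + (\<Sum>j<n. shared_count_step b k (risk_term b k j) u)
      \<le> (\<Sum>j<Suc n. risk_term b k j u)"
    unfolding sum.lessThan_Suc_shift by (rule add_mono)
  then show ?thesis
    unfolding root_risk_def shared_count_step_sum_divide by (simp add: add_divide_distrib[symmetric] divide_right_mono)
qed

section \<open>Colourings of the star and the coupled chain\<close>

lemma avail_finite: "finite (avail b k x v)"
  unfolding avail_def by simp

lemma proper_coloring_in_avail: "proper_coloring b k x \<Longrightarrow> v \<in> {0..b} \<Longrightarrow> x v \<in> avail b k x v"
  unfolding proper_coloring_def avail_def colorings_def star_adj_def
  by (auto simp: PiE_def Pi_def)

lemma avail_leaf: "v \<in> {1..b} \<Longrightarrow> avail b k x v = {c \<in> {1..k}. c \<noteq> x 0}"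
  unfolding avail_def star_adj_def by auto

lemma avail_root: "avail b k x 0 = {c \<in> {1..k}. c \<notin> x ` {1..b}}"
  unfolding avail_def star_adj_def by auto

lemma proper_coloring_range: "proper_coloring b k x \<Longrightarrow> v \<in> {0..b} \<Longrightarrow> x v \<in> {1..k}"
  unfolding proper_coloring_def colorings_def using PiE_mem by blast

lemma proper_coloring_update:
  assumes "proper_coloring b k x" "v \<in> {0..b}" "c \<in> avail b k x v"
  shows "proper_coloring b k (x(v := c))"
  using assms unfolding proper_coloring_def avail_def colorings_def star_adj_def
  by (auto simp: PiE_def Pi_def extensional_def)

lemma proper_coloring_eqI:
  assumes "proper_coloring b k x" "proper_coloring b k y" "\<forall>v\<in>{0..b}. x v = y v"
  shows "x = y"
proof
  fix l
  show "x l = y l"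
    using assms unfolding proper_coloring_def colorings_def
    by (cases "l \<in> {0..b}") (auto simp: PiE_def extensional_def)
qed

text \<open>The diagonal points already carry total mass 1.\<close>
lemma pmf_diagonal_support:
  fixes p :: "('a \<times> 'a) pmf"
  assumes fin: "finite A" and ne: "A \<noteq> {}" and diag: "\<forall>c\<in>A. pmf p (c, c) \<ge> 1 / real (card A)"
    and z: "z \<in> set_pmf p"
  shows "fst z = snd z \<and> fst z \<in> A"
proof (rule ccontr)
  assume off: "\<not> (fst z = snd z \<and> fst z \<in> A)"
  define D where "D = (\<lambda>c. (c, c)) ` A"
  have "1 = (\<Sum>c\<in>A. 1 / real (card A))"
    using fin ne by simp
  also have "\<dots> \<le> (\<Sum>c\<in>A. pmf p (c, c))"
    using diag by (intro sum_mono) auto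
  also have "\<dots> = sum (pmf p) D"
    unfolding D_def by (subst sum.reindex) (auto simp: inj_on_def)
  also have "\<dots> < pmf p z + sum (pmf p) D"
    using z by (simp add: pmf_positive)
  also have "\<dots> = sum (pmf p) (insert z D)"
    using fin off unfolding D_def by (subst sum.insert) auto
  also have "\<dots> = measure_pmf.prob p (insert z D)"
    using fin unfolding D_def by (simp add: measure_measure_pmf_finite)
  finally show False
    using measure_pmf.prob_le_1[of p "insert z D"] by linarith
qed

definition coupled_step ::
  "nat \<Rightarrow> (nat \<Rightarrow> (nat \<Rightarrow> nat) \<times> (nat \<Rightarrow> nat) \<Rightarrow> nat \<Rightarrow> (nat \<times> nat) pmf) \<Rightarrow> nat
   \<Rightarrow> (nat \<Rightarrow> nat) \<times> (nat \<Rightarrow> nat) \<Rightarrow> ((nat \<Rightarrow> nat) \<times> (nat \<Rightarrow> nat)) pmf" where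
  "coupled_step b K t = (\<lambda>(x, y). bind_pmf (pmf_of_set {0..b}) (\<lambda>v.
     map_pmf (\<lambda>(c, c'). (x(v := c), y(v := c'))) (K t (x, y) v)))"

text \<open>The coupled chain started at time t0, unrolled from its first step as a first-step
  analysis needs (coupled_chain unrolls from its last step).\<close>
fun coupled_run ::
  "nat \<Rightarrow> (nat \<Rightarrow> (nat \<Rightarrow> nat) \<times> (nat \<Rightarrow> nat) \<Rightarrow> nat \<Rightarrow> (nat \<times> nat) pmf) \<Rightarrow> nat
   \<Rightarrow> (nat \<Rightarrow> nat) \<times> (nat \<Rightarrow> nat) \<Rightarrow> nat \<Rightarrow> ((nat \<Rightarrow> nat) \<times> (nat \<Rightarrow> nat)) pmf" where
  "coupled_run b K t0 s 0 = return_pmf s"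
| "coupled_run b K t0 s (Suc n) = bind_pmf (coupled_step b K t0 s) (\<lambda>s'. coupled_run b K (Suc t0) s' n)"

lemma coupled_run_Suc_last:
  "coupled_run b K t0 s (Suc n) = bind_pmf (coupled_run b K t0 s n) (coupled_step b K (t0 + n))"
proof (induction n arbitrary: t0 s)
  case 0
  then show ?case by (simp add: bind_return_pmf bind_return_pmf')
next
  case (Suc n)
  have "coupled_run b K t0 s (Suc (Suc n))
      = bind_pmf (coupled_step b K t0 s) (\<lambda>s'. bind_pmf (coupled_run b K (Suc t0) s' n) (coupled_step b K (Suc t0 + n)))"
    using Suc by simp
  also have "\<dots> = bind_pmf (coupled_run b K t0 s (Suc n)) (coupled_step b K (t0 + Suc n))"
    by (simp add: bind_assoc_pmf)
  finally show ?case .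
qed

lemma coupled_chain_eq_coupled_run: "coupled_chain b K x0 y0 n = coupled_run b K 0 (x0, y0) n"
proof (induction n)
  case (Suc n)
  show ?case
    unfolding coupled_run_Suc_last coupled_chain.simps Suc coupled_step_def by simp
qed simp

lemma coupled_step_support:
  assumes "s' \<in> set_pmf (coupled_step b K t (x, y))"
  obtains v z where "v \<in> {0..b}" "z \<in> set_pmf (K t (x, y) v)" "s' = (x(v := fst z), y(v := snd z))"
  using assms unfolding coupled_step_def by (auto split: prod.splits)

locale maximal_coupling =
  fixes b k :: nat and K :: "nat \<Rightarrow> (nat \<Rightarrow> nat) \<times> (nat \<Rightarrow> nat) \<Rightarrow> nat \<Rightarrow> (nat \<times> nat) pmf"
  assumes kernel: "maximal_coupling_kernel b k K"
begin

lemma kernel_marginals: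
  assumes "proper_coloring b k x" "proper_coloring b k y" "v \<in> {0..b}"
  shows "map_pmf fst (K t (x, y) v) = pmf_of_set (avail b k x v)"
    and "map_pmf snd (K t (x, y) v) = pmf_of_set (avail b k y v)"
  using kernel assms unfolding maximal_coupling_kernel_def by blast+

lemma kernel_support:
  assumes x: "proper_coloring b k x" and y: "proper_coloring b k y" and v: "v \<in> {0..b}"
    and z: "z \<in> set_pmf (K t (x, y) v)"
  shows "fst z \<in> avail b k x v" "snd z \<in> avail b k y v"
proof -
  have "avail b k x v \<noteq> {}" "avail b k y v \<noteq> {}"
    using proper_coloring_in_avail x y v by blast+
  moreover have "fst z \<in> set_pmf (map_pmf fst (K t (x, y) v))" "snd z \<in> set_pmf (map_pmf snd (K t (x, y) v))"
    using z by auto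
  ultimately show "fst z \<in> avail b k x v" "snd z \<in> avail b k y v"
    unfolding kernel_marginals[OF x y v] by (simp_all add: avail_finite)
qed

lemma kernel_coalesces:
  assumes x: "proper_coloring b k x" and y: "proper_coloring b k y" and v: "v \<in> {0..b}"
    and same: "avail b k x v = avail b k y v" and z: "z \<in> set_pmf (K t (x, y) v)"
  shows "fst z = snd z" "fst z \<in> avail b k x v"
proof -
  have "\<forall>c \<in> avail b k x v. pmf (K t (x, y) v) (c, c) \<ge> 1 / real (card (avail b k x v))"
    using kernel x y v same unfolding maximal_coupling_kernel_def by force
  moreover have "avail b k x v \<noteq> {}"
    using proper_coloring_in_avail x v by blast
  ultimately show "fst z = snd z" "fst z \<in> avail b k x v"
    using pmf_diagonal_support[OF avail_finite] z by blast+
qed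

lemma coupled_run_stays_coalesced:
  assumes "proper_coloring b k x"
  shows "emeasure (measure_pmf (coupled_run b K t0 (x, x) n)) {(x, y). x \<noteq> y} = 0"
  using assms
proof (induction n arbitrary: t0 x)
  case 0
  then show ?case by simp
next
  case (Suc n)
  have "emeasure (measure_pmf (coupled_run b K t0 (x, x) (Suc n))) {(x, y). x \<noteq> y}
      = (\<integral>\<^sup>+s'. emeasure (measure_pmf (coupled_run b K (Suc t0) s' n)) {(x, y). x \<noteq> y}
           \<partial>measure_pmf (coupled_step b K t0 (x, x)))"
    by simp
  also have "\<dots> = (\<integral>\<^sup>+s'. 0 \<partial>measure_pmf (coupled_step b K t0 (x, x)))"
  proof (rule nn_integral_cong_AE, unfold AE_measure_pmf_iff, intro ballI)
    fix s' assume "s' \<in> set_pmf (coupled_step b K t0 (x, x))"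
    then obtain v z where v: "v \<in> {0..b}" and z: "z \<in> set_pmf (K t0 (x, x) v)"
      and s': "s' = (x(v := fst z), x(v := snd z))" by (rule coupled_step_support)
    have "s' = (x(v := fst z), x(v := fst z))"
      using s' kernel_coalesces(1)[OF Suc.prems Suc.prems v refl z] by simp
    moreover have "proper_coloring b k (x(v := fst z))"
      using proper_coloring_update[OF Suc.prems v kernel_coalesces(2)[OF Suc.prems Suc.prems v refl z]] .
    ultimately show "emeasure (measure_pmf (coupled_run b K (Suc t0) s' n)) {(x, y). x \<noteq> y} = 0"
      using Suc.IH by blast
  qed
  finally show ?case by simp
qed

end

section \<open>The potential\<close>

lemma sum_card_Diff_singleton:
  assumes "finite V" "D \<subseteq> V"
  shows "(\<Sum>v\<in>V. card (D - {v})) = (card V - 1) * card D"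
proof -
  have fin: "finite D" using assms finite_subset by blast
  have remove: "card (D - {v}) + (if v \<in> D then 1 else 0) = card D" for v
  proof (cases "v \<in> D")
    case True
    then show ?thesis using card_Suc_Diff1[OF fin True] by simp
  qed simp
  have "(\<Sum>v\<in>V. card (D - {v})) + card D = (\<Sum>v\<in>V. card (D - {v}) + (if v \<in> D then 1 else 0))"
    using assms by (simp add: sum.distrib sum.If_cases Int_absorb1)
  also have "\<dots> = (\<Sum>v\<in>V. card D)"
    unfolding remove ..
  finally show ?thesis
    by (simp add: diff_mult_distrib)
qed

lemma sum_shift_at:
  fixes f :: "nat \<Rightarrow> real"
  assumes "finite A" "c \<in> A"
  shows "(\<Sum>a\<in>A. f (w + (if a = c then 1 else 0))) = f (w + 1) + (real (card A) - 1) * f w"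
proof -
  have "(\<Sum>a\<in>A - {c}. f (w + (if a = c then 1 else 0))) = (\<Sum>a\<in>A - {c}. f w)"
    by (rule sum.cong) auto
  then have "(\<Sum>a\<in>A. f (w + (if a = c then 1 else 0))) = f (w + 1) + real (card (A - {c})) * f w"
    using assms by (simp add: sum.remove)
  also have "\<dots> = f (w + 1) + (real (card A) - 1) * f w"
    using assms card_Suc_Diff1[OF assms] by (simp del: card_Diff_singleton)
  finally show ?thesis .
qed

lemma sum_if_mem:
  fixes a c :: real
  assumes "finite V" "S \<subseteq> V"
  shows "(\<Sum>v\<in>V. if v \<in> S then a else c) = real (card S) * a + (real (card V) - real (card S)) * c"
proof -
  have "(\<Sum>v\<in>V. if v \<in> S then a else c) = (\<Sum>v\<in>S. a) + (\<Sum>v\<in>V - S. c)"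
    using assms by (simp add: sum.If_cases Int_absorb1 Diff_eq)
  also have "\<dots> = real (card S) * a + (real (card V) - real (card S)) * c"
    using assms by (simp add: card_Diff_subset finite_subset of_nat_diff card_mono)
  finally show ?thesis .
qed

lemma sum_leaves_shared_count_step:
  fixes f :: "nat \<Rightarrow> real"
  assumes k: "k \<ge> 2" and U: "U \<subseteq> {1..b}"
  shows "f (card U) + (\<Sum>v\<in>{1..b}. (f (card (U - {v}) + 1) + (real k - 2) * f (card (U - {v}))) / (real k - 1))
      = (real b + 1) * shared_count_step b k f (card U)"
proof -
  define u where "u = card U"
  define q where "q = 1 / (real k - 1)"
  have "1 - q = (real k - 2) / (real k - 1)"
    unfolding q_def using k by (simp add: field_simps)
  then have avg: "(f (w + 1) + (real k - 2) * f w) / (real k - 1) = q * f (Suc w) + (1 - q) * f w" for w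
    unfolding q_def by (simp add: add_divide_distrib)
  have card_remove: "card (U - {v}) = (if v \<in> U then u - 1 else u)" and "v \<in> U \<Longrightarrow> Suc (u - 1) = u" for v
    unfolding u_def using card_Suc_Diff1[OF finite_subset[OF U], of v] by auto
  then have "(\<Sum>v\<in>{1..b}. (f (card (U - {v}) + 1) + (real k - 2) * f (card (U - {v}))) / (real k - 1))
      = (\<Sum>v\<in>{1..b}. if v \<in> U then q * f u + (1 - q) * f (u - 1) else q * f (Suc u) + (1 - q) * f u)"
    unfolding avg card_remove by (intro sum.cong) auto
  also have "\<dots> = real u * (q * f u + (1 - q) * f (u - 1)) + (real b - real u) * (q * f (Suc u) + (1 - q) * f u)"
    unfolding u_def using U by (subst sum_if_mem) auto
  finally show ?thesis
    unfolding shared_count_step_def u_def[symmetric] q_def by simp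
qed

definition disagreement_pattern ::
  "nat \<Rightarrow> nat \<Rightarrow> nat \<Rightarrow> nat \<Rightarrow> (nat \<Rightarrow> nat) \<Rightarrow> (nat \<Rightarrow> nat) \<Rightarrow> bool" where
  "disagreement_pattern b k c1 c2 x y \<longleftrightarrow> proper_coloring b k x \<and> proper_coloring b k y \<and> x 0 = y 0 \<and>
     (\<forall>l\<in>{1..b}. x l \<noteq> y l \<longrightarrow> x l = c1 \<and> y l = c2) \<and> x 0 \<noteq> c1 \<and> x 0 \<noteq> c2"

definition disagreeing_leaves :: "nat \<Rightarrow> (nat \<Rightarrow> nat) \<Rightarrow> (nat \<Rightarrow> nat) \<Rightarrow> nat set" where
  "disagreeing_leaves b x y = {l \<in> {1..b}. x l \<noteq> y l}"

definition shared_leaves :: "nat \<Rightarrow> nat \<Rightarrow> (nat \<Rightarrow> nat) \<Rightarrow> (nat \<Rightarrow> nat) \<Rightarrow> nat set" where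
  "shared_leaves b c x y = {l \<in> {1..b}. x l = c \<and> y l = c}"

definition potential :: "nat \<Rightarrow> nat \<Rightarrow> nat \<Rightarrow> nat \<Rightarrow> nat \<Rightarrow> (nat \<Rightarrow> nat) \<Rightarrow> (nat \<Rightarrow> nat) \<Rightarrow> real" where
  "potential b k c1 c2 n x y =
     real (card (disagreeing_leaves b x y)) * (real b / (real b + 1))^n
     + root_risk b k n (card (shared_leaves b c1 x y)) + root_risk b k n (card (shared_leaves b c2 x y))"

lemma potential_nonneg: "0 \<le> potential b k c1 c2 n x y"
  unfolding potential_def using root_risk_nonneg by (simp add: add_nonneg_nonneg)

lemma disagreeing_leaves_subset: "disagreeing_leaves b x y \<subseteq> {1..b}"
  and shared_leaves_subset: "shared_leaves b c x y \<subseteq> {1..b}"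
  unfolding disagreeing_leaves_def shared_leaves_def by auto

lemma leaves_update_root:
  "disagreeing_leaves b (x(0 := c)) (y(0 := c')) = disagreeing_leaves b x y"
  "shared_leaves b d (x(0 := c)) (y(0 := c')) = shared_leaves b d x y"
  unfolding disagreeing_leaves_def shared_leaves_def by auto

lemma disagreeing_leaves_update: "disagreeing_leaves b (x(v := c)) (y(v := c)) = disagreeing_leaves b x y - {v}"
  unfolding disagreeing_leaves_def by auto

lemma card_shared_leaves_update_leaf:
  assumes "v \<in> {1..b}"
  shows "card (shared_leaves b d (x(v := c)) (y(v := c)))
           = card (shared_leaves b d x y - {v}) + (if c = d then 1 else 0)"
proof -
  have "shared_leaves b d (x(v := c)) (y(v := c)) = (shared_leaves b d x y - {v}) \<union> (if c = d then {v} else {})"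
    using assms unfolding shared_leaves_def by auto
  then show ?thesis
    using finite_subset[OF shared_leaves_subset] by (simp add: card.insert_remove)
qed

lemma eq_if_no_disagreeing_leaves:
  assumes "proper_coloring b k x" "proper_coloring b k y" "x 0 = y 0" "disagreeing_leaves b x y = {}"
  shows "x = y"
proof (rule proper_coloring_eqI[OF assms(1,2)], intro ballI)
  fix v assume "v \<in> {0..b}"
  then show "x v = y v"
    using assms by (cases "v = 0") (auto simp: disagreeing_leaves_def)
qed

lemma disagreement_patternI:
  assumes x: "proper_coloring b k x" and y: "proper_coloring b k y" and root: "x 0 = y 0"
    and leaves: "\<forall>l\<in>{1..b}. x l \<noteq> y l \<longrightarrow> x l = c1 \<and> y l = c2"
    and D: "disagreeing_leaves b x y \<noteq> {}"
  shows "disagreement_pattern b k c1 c2 x y"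
proof -
  obtain l where l: "l \<in> {1..b}" "x l = c1" "y l = c2"
    using D leaves unfolding disagreeing_leaves_def by blast
  then have "star_adj b 0 l" "0 \<in> {0..b}" "l \<in> {0..b}"
    unfolding star_adj_def by auto
  then have "x 0 \<noteq> x l" "y 0 \<noteq> y l"
    using x y unfolding proper_coloring_def by blast+
  then have "x 0 \<noteq> c1" "x 0 \<noteq> c2"
    using root l by auto
  then show ?thesis
    unfolding disagreement_pattern_def using x y root leaves by blast
qed

lemma disagreement_pattern_update_leaf:
  assumes "disagreement_pattern b k c1 c2 x y" "v \<in> {1..b}" "c \<in> avail b k x v"
  shows "disagreement_pattern b k c1 c2 (x(v := c)) (y(v := c))"
proof -
  have "avail b k x v = avail b k y v"
    using assms avail_leaf[of v b] unfolding disagreement_pattern_def by simp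
  then show ?thesis
    using assms proper_coloring_update[of b k _ v c] unfolding disagreement_pattern_def by auto
qed

lemma disagreement_pattern_update_root:
  assumes pat: "disagreement_pattern b k c1 c2 x y" and D: "disagreeing_leaves b x y \<noteq> {}"
    and c: "c \<in> avail b k x 0" "c \<in> avail b k y 0"
  shows "disagreement_pattern b k c1 c2 (x(0 := c)) (y(0 := c))"
proof -
  obtain l where l: "l \<in> {1..b}" "x l = c1" "y l = c2"
    using D pat unfolding disagreeing_leaves_def disagreement_pattern_def by blast
  then have "c \<noteq> c1" "c \<noteq> c2"
    using c unfolding avail_root by auto
  then show ?thesis
    using pat c proper_coloring_update[of b k _ 0 c] unfolding disagreement_pattern_def by auto
qed

lemma avail_root_eq_if_shared:
  assumes pat: "disagreement_pattern b k c1 c2 x y"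
    and U1: "shared_leaves b c1 x y \<noteq> {}" and U2: "shared_leaves b c2 x y \<noteq> {}"
  shows "avail b k x 0 = avail b k y 0"
proof -
  obtain l1 l2 where l1: "l1 \<in> {1..b}" "x l1 = c1" "y l1 = c1"
    and l2: "l2 \<in> {1..b}" "x l2 = c2" "y l2 = c2"
    using U1 U2 unfolding shared_leaves_def by blast
  have diff: "x l = c1 \<and> y l = c2" if "l \<in> {1..b}" "x l \<noteq> y l" for l
    using pat that unfolding disagreement_pattern_def by blast
  have "x l \<in> y ` {1..b}" if l: "l \<in> {1..b}" for l
  proof (cases "x l = y l")
    case True
    then show ?thesis using l by simp
  next
    case False
    then have "x l = y l1" using diff[OF l] l1 by simp
    then show ?thesis using l1(1) by simp
  qed
  moreover have "y l \<in> x ` {1..b}" if l: "l \<in> {1..b}" for l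
  proof (cases "x l = y l")
    case True
    then show ?thesis using l by (metis image_eqI)
  next
    case False
    then have "y l = x l2" using diff[OF l] l2 by simp
    then show ?thesis using l2(1) by simp
  qed
  ultimately have "x ` {1..b} = y ` {1..b}"
    by blast
  then show ?thesis
    unfolding avail_root by simp
qed

lemma disagreement_pattern_colours:
  assumes pat: "disagreement_pattern b k c1 c2 x y" and D: "disagreeing_leaves b x y \<noteq> {}"
  shows "k \<ge> 2" "c1 \<in> {c \<in> {1..k}. c \<noteq> x 0}" "c2 \<in> {c \<in> {1..k}. c \<noteq> x 0}"
proof -
  obtain l where l: "l \<in> {1..b}" "x l = c1" "y l = c2"
    using D pat unfolding disagreeing_leaves_def disagreement_pattern_def by blast
  have "x l \<in> {1..k}" "y l \<in> {1..k}" "x 0 \<in> {1..k}"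
    using pat l(1) proper_coloring_range unfolding disagreement_pattern_def by auto
  moreover have "x 0 \<noteq> c1" "x 0 \<noteq> c2"
    using pat unfolding disagreement_pattern_def by auto
  ultimately show "k \<ge> 2" "c1 \<in> {c \<in> {1..k}. c \<noteq> x 0}" "c2 \<in> {c \<in> {1..k}. c \<noteq> x 0}"
    using l by auto
qed

lemma sum_card_disagreeing_leaves_Diff:
  "real (card (disagreeing_leaves b x y)) + (\<Sum>v\<in>{1..b}. real (card (disagreeing_leaves b x y - {v})))
     = real b * real (card (disagreeing_leaves b x y))"
proof -
  have "real (card (disagreeing_leaves b x y)) + (\<Sum>v\<in>{1..b}. real (card (disagreeing_leaves b x y - {v})))
      = (\<Sum>v\<in>{0..b}. real (card (disagreeing_leaves b x y - {v})))"
    by (simp add: sum.atLeast_Suc_atMost disagreeing_leaves_def)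
  also have "\<dots> = real b * real (card (disagreeing_leaves b x y))"
    unfolding of_nat_sum[symmetric] using disagreeing_leaves_subset[of b x y]
    by (subst sum_card_Diff_singleton) auto
  finally show ?thesis .
qed

lemma leaf_average_potential:
  assumes pat: "disagreement_pattern b k c1 c2 x y" and D: "disagreeing_leaves b x y \<noteq> {}"
    and v: "v \<in> {1..b}"
  shows "(\<Sum>c\<in>avail b k x v. potential b k c1 c2 n (x(v := c)) (y(v := c))) / real (card (avail b k x v))
      = real (card (disagreeing_leaves b x y - {v})) * (real b / (real b + 1))^n
        + (root_risk b k n (card (shared_leaves b c1 x y - {v}) + 1)
           + (real k - 2) * root_risk b k n (card (shared_leaves b c1 x y - {v}))) / (real k - 1)
        + (root_risk b k n (card (shared_leaves b c2 x y - {v}) + 1)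
           + (real k - 2) * root_risk b k n (card (shared_leaves b c2 x y - {v}))) / (real k - 1)"
proof -
  define A where "A = avail b k x v"
  define R where "R = root_risk b k n"
  define d where "d = real (card (disagreeing_leaves b x y - {v})) * (real b / (real b + 1))^n"
  define w1 where "w1 = card (shared_leaves b c1 x y - {v})"
  define w2 where "w2 = card (shared_leaves b c2 x y - {v})"
  note colours = disagreement_pattern_colours[OF pat D]
  have A: "A = {c \<in> {1..k}. c \<noteq> x 0}"
    unfolding A_def using avail_leaf[OF v] .
  have "x 0 \<in> {1..k}"
    using pat proper_coloring_range unfolding disagreement_pattern_def by auto
  moreover have "A = {1..k} - {x 0}"
    unfolding A by auto
  ultimately have fin: "finite A" and card_A: "real (card A) = real k - 1"
    using colours(1) by (simp_all add: of_nat_diff)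
  have "(\<Sum>c\<in>A. potential b k c1 c2 n (x(v := c)) (y(v := c)))
      = (\<Sum>c\<in>A. d + R (w1 + (if c = c1 then 1 else 0)) + R (w2 + (if c = c2 then 1 else 0)))"
    unfolding potential_def disagreeing_leaves_update card_shared_leaves_update_leaf[OF v]
      d_def R_def w1_def w2_def by simp
  also have "\<dots> = (real k - 1) * d + (R (w1 + 1) + (real k - 2) * R w1) + (R (w2 + 1) + (real k - 2) * R w2)"
    using sum_shift_at[OF fin, of c1 R w1] sum_shift_at[OF fin, of c2 R w2] colours A card_A
    by (simp add: sum.distrib)
  finally show ?thesis
    using colours(1) unfolding A_def[symmetric] card_A d_def[symmetric] R_def[symmetric] w1_def[symmetric] w2_def[symmetric]
    by (simp add: add_divide_distrib)
qed

lemma average_potential_le: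
  assumes pat: "disagreement_pattern b k c1 c2 x y" and D: "disagreeing_leaves b x y \<noteq> {}"
  shows "(potential b k c1 c2 n x y
          + (if shared_leaves b c1 x y = {} then 1 else 0) + (if shared_leaves b c2 x y = {} then 1 else 0)
          + (\<Sum>v\<in>{1..b}. (\<Sum>c\<in>avail b k x v. potential b k c1 c2 n (x(v := c)) (y(v := c)))
                            / real (card (avail b k x v))))
         / (real b + 1)
       \<le> potential b k c1 c2 (Suc n) x y"
proof -
  define \<alpha> where "\<alpha> = real b / (real b + 1)"
  define R where "R = root_risk b k n"
  define m where "m = card (disagreeing_leaves b x y)"
  define U1 where "U1 = shared_leaves b c1 x y"
  define U2 where "U2 = shared_leaves b c2 x y"
  define E where "E U = (R (card U) + (\<Sum>v\<in>{1..b}. (R (card (U - {v}) + 1) + (real k - 2) * R (card (U - {v})))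
      / (real k - 1)))" for U
  have k: "k \<ge> 2" using disagreement_pattern_colours[OF pat D] by simp
  have fin: "finite U1" "finite U2"
    unfolding U1_def U2_def using finite_subset[OF shared_leaves_subset] by auto
  note D_sum = sum_card_disagreeing_leaves_Diff[of b x y, folded m_def]
  have E: "E U = (real b + 1) * shared_count_step b k R (card U)" if "U \<subseteq> {1..b}" for U
    unfolding E_def using sum_leaves_shared_count_step[OF k that] by simp
  have leaves: "(\<Sum>v\<in>{1..b}. (\<Sum>c\<in>avail b k x v. potential b k c1 c2 n (x(v := c)) (y(v := c)))
                            / real (card (avail b k x v)))
      = (\<Sum>v\<in>{1..b}. real (card (disagreeing_leaves b x y - {v})) * \<alpha>^n
          + (R (card (U1 - {v}) + 1) + (real k - 2) * R (card (U1 - {v}))) / (real k - 1)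
          + (R (card (U2 - {v}) + 1) + (real k - 2) * R (card (U2 - {v}))) / (real k - 1))"
    unfolding \<alpha>_def R_def U1_def U2_def using leaf_average_potential[OF pat D] by (intro sum.cong) auto
  have "potential b k c1 c2 n x y
          + (if U1 = {} then 1 else 0) + (if U2 = {} then 1 else 0)
          + (\<Sum>v\<in>{1..b}. (\<Sum>c\<in>avail b k x v. potential b k c1 c2 n (x(v := c)) (y(v := c)))
                            / real (card (avail b k x v)))
      = (real m + (\<Sum>v\<in>{1..b}. real (card (disagreeing_leaves b x y - {v})))) * \<alpha>^n
        + ((if card U1 = 0 then 1 else 0) + E U1) + ((if card U2 = 0 then 1 else 0) + E U2)"
    unfolding leaves unfolding potential_def E_def
    using fin by (simp add: sum.distrib algebra_simps sum_distrib_left \<alpha>_def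
        flip: R_def m_def U1_def U2_def)
  also have "\<dots> = (real b + 1) * (real m * \<alpha>^Suc n
        + ((if card U1 = 0 then 1 else 0) / (real b + 1) + shared_count_step b k R (card U1))
        + ((if card U2 = 0 then 1 else 0) / (real b + 1) + shared_count_step b k R (card U2)))"
  proof -
    have "(real b + 1) * \<alpha> = real b"
      unfolding \<alpha>_def by simp
    then show ?thesis
      unfolding D_sum E[OF shared_leaves_subset[of b c1 x y, folded U1_def]]
        E[OF shared_leaves_subset[of b c2 x y, folded U2_def]]
      by (simp add: distrib_left)
  qed
  finally show ?thesis
    using root_risk_step[OF k, of "card U1" b n] root_risk_step[OF k, of "card U2" b n]
    unfolding potential_def U1_def[symmetric] U2_def[symmetric] m_def[symmetric] \<alpha>_def[symmetric] R_def
    by (simp add: mult.commute)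
qed

section \<open>Coalescence\<close>

lemma nn_integral_pmf_of_set_real:
  assumes "finite S" "S \<noteq> {}" "\<And>x. x \<in> S \<Longrightarrow> 0 \<le> f x"
  shows "(\<integral>\<^sup>+x. ennreal (f x) \<partial>measure_pmf (pmf_of_set S)) = ennreal (sum f S / real (card S))"
proof -
  have "(\<integral>\<^sup>+x. ennreal (f x) \<partial>measure_pmf (pmf_of_set S)) = (\<Sum>x\<in>S. ennreal (f x)) / of_nat (card S)"
    using assms by (simp add: nn_integral_pmf_of_set)
  also have "\<dots> = ennreal (sum f S) / ennreal (real (card S))"
    using assms by (simp add: ennreal_of_nat_eq_real_of_nat)
  also have "\<dots> = ennreal (sum f S / real (card S))"
    using assms by (intro divide_ennreal) (auto intro: sum_nonneg simp: card_gt_0_iff)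
  finally show ?thesis .
qed

definition potential_bound ::
  "nat \<Rightarrow> nat \<Rightarrow> nat \<Rightarrow> nat \<Rightarrow> nat \<Rightarrow> (nat \<Rightarrow> nat) \<times> (nat \<Rightarrow> nat) \<Rightarrow> real" where
  "potential_bound b k c1 c2 n s =
     (if disagreement_pattern b k c1 c2 (fst s) (snd s) then potential b k c1 c2 n (fst s) (snd s) else 1)"

context maximal_coupling
begin

lemma root_update_le:
  assumes pat: "disagreement_pattern b k c1 c2 x y" and D: "disagreeing_leaves b x y \<noteq> {}"
  shows "(\<integral>\<^sup>+z. ennreal (potential_bound b k c1 c2 n (x(0 := fst z), y(0 := snd z))) \<partial>measure_pmf (K t (x, y) 0))
      \<le> ennreal (potential b k c1 c2 n x y
          + (if shared_leaves b c1 x y = {} then 1 else 0) + (if shared_leaves b c2 x y = {} then 1 else 0))"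
    (is "_ \<le> ennreal ?r")
proof -
  have px: "proper_coloring b k x" and py: "proper_coloring b k y"
    using pat unfolding disagreement_pattern_def by auto
  have "(\<integral>\<^sup>+z. ennreal (potential_bound b k c1 c2 n (x(0 := fst z), y(0 := snd z))) \<partial>measure_pmf (K t (x, y) 0))
      \<le> (\<integral>\<^sup>+z. ennreal ?r \<partial>measure_pmf (K t (x, y) 0))"
  proof (rule nn_integral_mono_AE, unfold AE_measure_pmf_iff, intro ballI)
    fix z assume z: "z \<in> set_pmf (K t (x, y) 0)"
    note z_avail = kernel_support[OF px py _ z]
    show "ennreal (potential_bound b k c1 c2 n (x(0 := fst z), y(0 := snd z))) \<le> ennreal ?r"
    proof (cases "fst z = snd z")
      case True
      then have "disagreement_pattern b k c1 c2 (x(0 := fst z)) (y(0 := snd z))"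
        using disagreement_pattern_update_root[OF pat D] z_avail by auto
      then have "potential_bound b k c1 c2 n (x(0 := fst z), y(0 := snd z)) = potential b k c1 c2 n x y"
        unfolding potential_bound_def potential_def by (simp add: leaves_update_root)
      then show ?thesis
        by (intro ennreal_leI) auto
    next
      case False
      then have "shared_leaves b c1 x y = {} \<or> shared_leaves b c2 x y = {}"
        using avail_root_eq_if_shared[OF pat] kernel_coalesces(1)[OF px py _ _ z] by auto
      moreover have "\<not> disagreement_pattern b k c1 c2 (x(0 := fst z)) (y(0 := snd z))"
        using False unfolding disagreement_pattern_def by auto
      ultimately show ?thesis
        using potential_nonneg[of b k c1 c2 n x y] unfolding potential_bound_def
        by (intro ennreal_leI) auto
    qed
  qed
  then show ?thesis
    by (simp add: measure_pmf.emeasure_space_1)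
qed

lemma leaf_update_eq:
  assumes pat: "disagreement_pattern b k c1 c2 x y" and v: "v \<in> {1..b}"
  shows "(\<integral>\<^sup>+z. ennreal (potential_bound b k c1 c2 n (x(v := fst z), y(v := snd z))) \<partial>measure_pmf (K t (x, y) v))
      = ennreal ((\<Sum>c\<in>avail b k x v. potential b k c1 c2 n (x(v := c)) (y(v := c)))
                  / real (card (avail b k x v)))"
proof -
  define \<psi> where "\<psi> c = potential b k c1 c2 n (x(v := c)) (y(v := c))" for c
  have px: "proper_coloring b k x" and py: "proper_coloring b k y" and v0: "v \<in> {0..b}"
    using pat v unfolding disagreement_pattern_def by auto
  have same: "avail b k x v = avail b k y v"
    using pat avail_leaf[OF v] unfolding disagreement_pattern_def by simp
  have "(\<integral>\<^sup>+z. ennreal (potential_bound b k c1 c2 n (x(v := fst z), y(v := snd z))) \<partial>measure_pmf (K t (x, y) v))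
      = (\<integral>\<^sup>+z. ennreal (\<psi> (fst z)) \<partial>measure_pmf (K t (x, y) v))"
  proof (rule nn_integral_cong_AE, unfold AE_measure_pmf_iff, intro ballI)
    fix z assume z: "z \<in> set_pmf (K t (x, y) v)"
    note coalesce = kernel_coalesces[OF px py v0 same z]
    then have "disagreement_pattern b k c1 c2 (x(v := fst z)) (y(v := fst z))"
      using disagreement_pattern_update_leaf[OF pat v] by blast
    then show "ennreal (potential_bound b k c1 c2 n (x(v := fst z), y(v := snd z))) = ennreal (\<psi> (fst z))"
      unfolding potential_bound_def \<psi>_def using coalesce(1) by simp
  qed
  also have "\<dots> = (\<integral>\<^sup>+c. ennreal (\<psi> c) \<partial>measure_pmf (map_pmf fst (K t (x, y) v)))"
    by simp
  also have "\<dots> = ennreal (sum \<psi> (avail b k x v) / real (card (avail b k x v)))"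
    unfolding kernel_marginals[OF px py v0] using proper_coloring_in_avail[OF px v0]
    by (intro nn_integral_pmf_of_set_real avail_finite) (auto simp: \<psi>_def potential_nonneg)
  finally show ?thesis
    unfolding \<psi>_def .
qed

lemma coupled_step_potential_le:
  assumes pat: "disagreement_pattern b k c1 c2 x y" and D: "disagreeing_leaves b x y \<noteq> {}"
  shows "(\<integral>\<^sup>+s'. ennreal (potential_bound b k c1 c2 n s') \<partial>measure_pmf (coupled_step b K t (x, y)))
      \<le> ennreal (potential b k c1 c2 (Suc n) x y)"
proof -
  define r where "r v = (if v = 0
      then potential b k c1 c2 n x y
        + (if shared_leaves b c1 x y = {} then 1 else 0) + (if shared_leaves b c2 x y = {} then 1 else 0)
      else (\<Sum>c\<in>avail b k x v. potential b k c1 c2 n (x(v := c)) (y(v := c))) / real (card (avail b k x v)))"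
    for v
  have r_nonneg: "0 \<le> r v" for v
    unfolding r_def using potential_nonneg by (simp add: sum_nonneg)
  have "(\<integral>\<^sup>+s'. ennreal (potential_bound b k c1 c2 n s') \<partial>measure_pmf (coupled_step b K t (x, y)))
      = (\<integral>\<^sup>+v. (\<integral>\<^sup>+z. ennreal (potential_bound b k c1 c2 n (x(v := fst z), y(v := snd z)))
               \<partial>measure_pmf (K t (x, y) v)) \<partial>measure_pmf (pmf_of_set {0..b}))"
    unfolding coupled_step_def by (simp add: split_beta)
  also have "\<dots> \<le> (\<integral>\<^sup>+v. ennreal (r v) \<partial>measure_pmf (pmf_of_set {0..b}))"
  proof (rule nn_integral_mono_AE, unfold AE_measure_pmf_iff, intro ballI)
    fix v assume "v \<in> set_pmf (pmf_of_set {0..b})"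
    then have "v = 0 \<or> v \<in> {1..b}" by auto
    then show "(\<integral>\<^sup>+z. ennreal (potential_bound b k c1 c2 n (x(v := fst z), y(v := snd z)))
               \<partial>measure_pmf (K t (x, y) v)) \<le> ennreal (r v)"
      using root_update_le[OF pat D] leaf_update_eq[OF pat] unfolding r_def by auto
  qed
  also have "\<dots> = ennreal (sum r {0..b} / (real b + 1))"
    using r_nonneg by (subst nn_integral_pmf_of_set_real) (auto simp: add.commute)
  also have "\<dots> \<le> ennreal (potential b k c1 c2 (Suc n) x y)"
  proof (rule ennreal_leI)
    have "sum r {0..b} = r 0 + sum r {1..b}"
      by (simp add: sum.atLeast_Suc_atMost)
    then show "sum r {0..b} / (real b + 1) \<le> potential b k c1 c2 (Suc n) x y"
      using average_potential_le[OF pat D, of n] unfolding r_def by simp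
  qed
  finally show ?thesis .
qed

lemma coupled_run_no_disagreeing_leaves:
  assumes "disagreement_pattern b k c1 c2 x y" "disagreeing_leaves b x y = {}"
  shows "emeasure (measure_pmf (coupled_run b K t (x, y) n)) {(x, y). x \<noteq> y} = 0"
proof -
  have "x = y"
    using assms eq_if_no_disagreeing_leaves unfolding disagreement_pattern_def by blast
  then show ?thesis
    using coupled_run_stays_coalesced assms(1) unfolding disagreement_pattern_def by blast
qed

lemma disagreement_le_potential:
  assumes "disagreement_pattern b k c1 c2 x y"
  shows "emeasure (measure_pmf (coupled_run b K t (x, y) n)) {(x, y). x \<noteq> y} \<le> ennreal (potential b k c1 c2 n x y)"
  using assms
proof (induction n arbitrary: t x y)
  case n: 0
  show ?case
  proof (cases "disagreeing_leaves b x y = {}")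
    case True
    then show ?thesis
      using coupled_run_no_disagreeing_leaves[OF n] by (simp del: coupled_run.simps)
  next
    case False
    then have "1 \<le> potential b k c1 c2 0 x y"
      unfolding potential_def root_risk_def using finite_subset[OF disagreeing_leaves_subset]
      by (simp add: Suc_le_eq card_gt_0_iff)
    then have "(1::ennreal) \<le> ennreal (potential b k c1 c2 0 x y)"
      by (metis ennreal_1 ennreal_leI)
    then show ?thesis
      using measure_pmf.emeasure_le_1 order_trans by blast
  qed
next
  case (Suc n)
  show ?case
  proof (cases "disagreeing_leaves b x y = {}")
    case True
    then show ?thesis
      using coupled_run_no_disagreeing_leaves[OF Suc.prems] by (simp del: coupled_run.simps)
  next
    case False
    have "emeasure (measure_pmf (coupled_run b K t (x, y) (Suc n))) {(x, y). x \<noteq> y}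
        = (\<integral>\<^sup>+s'. emeasure (measure_pmf (coupled_run b K (Suc t) s' n)) {(x, y). x \<noteq> y}
             \<partial>measure_pmf (coupled_step b K t (x, y)))"
      by simp
    also have "\<dots> \<le> (\<integral>\<^sup>+s'. ennreal (potential_bound b k c1 c2 n s') \<partial>measure_pmf (coupled_step b K t (x, y)))"
    proof (rule nn_integral_mono)
      fix s' :: "(nat \<Rightarrow> nat) \<times> (nat \<Rightarrow> nat)"
      show "emeasure (measure_pmf (coupled_run b K (Suc t) s' n)) {(x, y). x \<noteq> y}
          \<le> ennreal (potential_bound b k c1 c2 n s')"
        using Suc.IH[of "fst s'" "snd s'"] measure_pmf.emeasure_le_1
        unfolding potential_bound_def by (cases s') auto
    qed
    also have "\<dots> \<le> ennreal (potential b k c1 c2 (Suc n) x y)"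
      by (rule coupled_step_potential_le[OF Suc.prems False])
    finally show ?thesis .
  qed
qed

end

lemma nat_floor_div_mult_ln_le:
  fixes \<epsilon> :: real
  assumes "0 \<le> \<epsilon>" "0 < ln (real b)"
  shows "real (nat \<lfloor>real b / ((1 + \<epsilon>) * ln (real b))\<rfloor>) * ln (real b) \<le> real b"
proof -
  define w where "w = real b / ((1 + \<epsilon>) * ln (real b))"
  define m where "m = nat \<lfloor>w\<rfloor>"
  have "0 \<le> w"
    unfolding w_def using assms by simp
  then have "real m \<le> w"
    unfolding m_def by linarith
  then have "real m * ((1 + \<epsilon>) * ln (real b)) \<le> real b"
    unfolding w_def using assms by (simp add: pos_le_divide_eq)
  moreover have "real m * ln (real b) \<le> real m * ((1 + \<epsilon>) * ln (real b))"
    using assms by (intro mult_left_mono) (auto simp: algebra_simps)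
  ultimately show ?thesis
    unfolding m_def w_def by linarith
qed

lemma potential_le_half:
  assumes lnb: "ln (real b) \<ge> 400" and k: "k \<ge> 2" and kb: "real k * ln (real b) \<le> real b"
    and T: "4 * (real b + 1) * ln (real b) \<le> real T" "real T \<le> 4 * (real b + 1) * ln (real b) + 1"
  shows "potential b k c1 c2 T x y \<le> 1 / 2"
proof -
  have risk: "root_risk b k T u \<le> 1 / 10" for u
  proof -
    have "root_risk b k T u
        \<le> (\<Sum>j<T. exp (- (real b / (2 * (real k - 1))) * (1 - (real b / (real b + 1))^j))) / (real b + 1)"
      unfolding root_risk_def by (intro divide_right_mono sum_mono risk_term_le_exp) auto
    then show ?thesis
      using large_base_exp_sum_le[OF lnb k kb T(2)] by linarith
  qed
  have "real (card (disagreeing_leaves b x y)) * (real b / (real b + 1))^T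
      \<le> real b * (real b / (real b + 1))^T"
    using card_mono[OF _ disagreeing_leaves_subset, of b x y] by (intro mult_right_mono) auto
  then show ?thesis
    unfolding potential_def using large_base_power_le[OF lnb T(1)]
      risk[of "card (shared_leaves b c1 x y)"] risk[of "card (shared_leaves b c2 x y)"] by linarith
qed

context maximal_coupling
begin

lemma coalescence_prob_ge_half:
  assumes x: "proper_coloring b k x" and y: "proper_coloring b k y" and root: "x 0 = y 0"
    and leaves: "\<forall>l\<in>{1..b}. x l \<noteq> y l \<longrightarrow> x l = c1 \<and> y l = c2"
    and lnb: "ln (real b) \<ge> 400" and kb: "real k * ln (real b) \<le> real b"
    and T: "4 * (real b + 1) * ln (real b) \<le> real T" "real T \<le> 4 * (real b + 1) * ln (real b) + 1"
  shows "1 / 2 \<le> measure_pmf.prob (coupled_run b K 0 (x, y) T) {(x, y). x = y}"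
proof -
  let ?p = "coupled_run b K 0 (x, y) T"
  have "measure_pmf.prob ?p {(x, y). x \<noteq> y} \<le> 1 / 2"
  proof (cases "disagreeing_leaves b x y = {}")
    case True
    then have "x = y"
      using eq_if_no_disagreeing_leaves x y root by blast
    then show ?thesis
      using coupled_run_stays_coalesced[OF x] by (simp add: measure_pmf.emeasure_eq_measure)
  next
    case False
    then have pat: "disagreement_pattern b k c1 c2 x y"
      using disagreement_patternI x y root leaves by blast
    have "measure_pmf.prob ?p {(x, y). x \<noteq> y} \<le> potential b k c1 c2 T x y"
      using disagreement_le_potential[OF pat] potential_nonneg
      by (simp add: measure_pmf.emeasure_eq_measure ennreal_le_iff)
    also have "\<dots> \<le> 1 / 2"
      using potential_le_half[OF lnb disagreement_pattern_colours(1)[OF pat False] kb T] .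
    finally show ?thesis .
  qed
  moreover have "UNIV - {(x, y). x \<noteq> y} = {(x, y). x = y}"
    by auto
  then have "measure_pmf.prob ?p {(x, y). x = y} = 1 - measure_pmf.prob ?p {(x, y). x \<noteq> y}"
    using measure_pmf.prob_compl[of "{(x, y). x \<noteq> y}" ?p] by (metis UNIV_I sets_measure_pmf space_measure_pmf)
  ultimately show ?thesis
    by linarith
qed

end

theorem lemma5:
  fixes \<epsilon> :: real
  assumes "\<epsilon> \<ge> 0"
  shows "\<exists>B. \<forall>(b::nat) k x0 y0 K.
     b \<ge> B \<longrightarrow>
     k = nat \<lfloor>real b / ((1 + \<epsilon>) * ln (real b))\<rfloor> \<longrightarrow>
     proper_coloring b k x0 \<longrightarrow> proper_coloring b k y0 \<longrightarrow>
     x0 0 = y0 0 \<longrightarrow>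
     (\<exists>c1 c2. \<forall>l\<in>{1..b}. x0 l \<noteq> y0 l \<longrightarrow> x0 l = c1 \<and> y0 l = c2) \<longrightarrow>
     maximal_coupling_kernel b k K \<longrightarrow>
     measure_pmf.prob (coupled_chain b K x0 y0 (nat \<lceil>4 * (real b + 1) * ln (real b)\<rceil>))
        {(x, y). x = y} \<ge> 1 / 2"
proof (intro exI[of _ "nat \<lceil>exp 400 :: real\<rceil>"] allI impI)
  fix b k x0 y0 K
  assume b: "nat \<lceil>exp 400 :: real\<rceil> \<le> b" and k: "k = nat \<lfloor>real b / ((1 + \<epsilon>) * ln (real b))\<rfloor>"
    and x0: "proper_coloring b k x0" and y0: "proper_coloring b k y0" and root: "x0 0 = y0 0"
    and leaves: "\<exists>c1 c2. \<forall>l\<in>{1..b}. x0 l \<noteq> y0 l \<longrightarrow> x0 l = c1 \<and> y0 l = c2"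
    and K: "maximal_coupling_kernel b k K"
  interpret maximal_coupling b k K
    using K by unfold_locales
  have large: "exp 400 \<le> real b"
    using b by linarith
  moreover have "0 < real b"
    using large exp_gt_zero[of 400] by linarith
  ultimately have lnb: "400 \<le> ln (real b)"
    using ln_le_cancel_iff[of "exp 400" "real b"] by simp
  have kb: "real k * ln (real b) \<le> real b"
    unfolding k using nat_floor_div_mult_ln_le[OF assms] lnb by simp
  define T where "T = nat \<lceil>4 * (real b + 1) * ln (real b)\<rceil>"
  have "0 \<le> 4 * (real b + 1) * ln (real b)"
    using lnb by simp
  then have T: "4 * (real b + 1) * ln (real b) \<le> real T" "real T \<le> 4 * (real b + 1) * ln (real b) + 1"
    unfolding T_def by linarith+
  obtain c1 c2 where "\<forall>l\<in>{1..b}. x0 l \<noteq> y0 l \<longrightarrow> x0 l = c1 \<and> y0 l = c2"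
    using leaves by blast
  from coalescence_prob_ge_half[OF x0 y0 root this lnb kb T]
  show "1 / 2 \<le> measure_pmf.prob (coupled_chain b K x0 y0 (nat \<lceil>4 * (real b + 1) * ln (real b)\<rceil>))
      {(x, y). x = y}"
    unfolding coupled_chain_eq_coupled_run T_def .
qed

end
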